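(* Let $n$ and $k$ be positive integers, let $E_{k}:=\{(i,j)\in\mathbb{Z}^{2}:|j-i|\geq k+1\}$, and let $h:\{0,1,\ldots,n-1\}\to\mathbb{R}$ be a nonincreasing function. Let $u:\{1,\ldots,n\}\to\mathbb{Z}$ be any function and let $Mu$ be its nondecreasing rearrangement. Then \[ \mathcal{H}(h,E_{k},u)\geq\mathcal{H}(h,E_{k},Mu). \]
   Context: For a function $u:\{1,\ldots,n\}\to\mathbb{Z}$, a symmetric set $E\subseteq\mathbb{Z}^{2}$ (i.e. $(i,j)\in E$ iff $(j,i)\in E$) and $h:\{0,\ldots,n-1\}\to\mathbb{R}$, define $J(E,u):=\{(x,y)\in\{1,\ldots,n\}^{2}:x\leq y,\ (u(x),u(y))\in E\}$ (pairs with $x=y$ are allowed) and $\mathcal{H}(h,E,u):=\sum_{(x,y)\in J(E,u)}h(y-x)$. The nondecreasing rearrangement of $u$ is $Mu:\{1,\ldots,n\}\to\mathbb{Z}$, $Mu(x):=\min\{j\in\mathbb{Z}:|\{y\in\{1,\ldots,n\}:u(y)\leq j\}|\geq x\}$, where $|A|$ is the cardinality of $A$. *)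

theory Defs
  imports Complex_Main
begin

definition symmetric_set :: "(int \<times> int) set \<Rightarrow> bool" where
  "symmetric_set E \<longleftrightarrow> (\<forall>i j. (i, j) \<in> E \<longleftrightarrow> (j, i) \<in> E)"

definition Jset :: "nat \<Rightarrow> (int \<times> int) set \<Rightarrow> (nat \<Rightarrow> int) \<Rightarrow> (nat \<times> nat) set" where
  "Jset n E u = {(x, y). x \<in> {1..n} \<and> y \<in> {1..n} \<and> x \<le> y \<and> (u x, u y) \<in> E}"

definition Hfun :: "nat \<Rightarrow> (nat \<Rightarrow> real) \<Rightarrow> (int \<times> int) set \<Rightarrow> (nat \<Rightarrow> int) \<Rightarrow> real" where
  "Hfun n h E u = (\<Sum>(x, y)\<in>Jset n E u. h (y - x))"

definition Mrearr :: "nat \<Rightarrow> (nat \<Rightarrow> int) \<Rightarrow> nat \<Rightarrow> int" where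
  "Mrearr n u x = (LEAST j::int. card {y \<in> {1..n}. u y \<le> j} \<ge> x)"

definition Ek :: "nat \<Rightarrow> (int \<times> int) set" where
  "Ek k = {(i, j). \<bar>j - i\<bar> \<ge> int k + 1}"

end

(*
  Encode u as the list of its values; H then sums h(j - i) over the related pairs i < j of
  list positions.  Sorting by insertion, x # xs is compared with insort x (sort xs): the row
  of x in x # xs weighs at least as much as if its related elements all sat at the end of xs,
  and inserting x into a sorted list costs no more than that.
*)
theory Submission
  imports Defs "HOL-Library.Multiset"
begin

definition pair_energy :: "(nat \<Rightarrow> real) \<Rightarrow> ('a \<Rightarrow> 'a \<Rightarrow> bool) \<Rightarrow> 'a list \<Rightarrow> real" where
  "pair_energy h R ws = (\<Sum>i<length ws. \<Sum>j<length ws.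
      if i < j \<and> R (ws ! i) (ws ! j) then h (j - i) else 0)"

definition row_energy :: "(nat \<Rightarrow> real) \<Rightarrow> ('a \<Rightarrow> bool) \<Rightarrow> 'a list \<Rightarrow> real" where
  "row_energy h P zs = (\<Sum>j<length zs. if P (zs ! j) then h (Suc j) else 0)"

text \<open>For nonincreasing \<open>h\<close>, \<open>tail_sum h L c\<close> is the least total weight of \<open>c\<close> of the
  positions \<open>1, \<dots>, L\<close>, attained by the last \<open>c\<close> of them.\<close>

definition tail_sum :: "(nat \<Rightarrow> real) \<Rightarrow> nat \<Rightarrow> nat \<Rightarrow> real" where
  "tail_sum h L c = (\<Sum>i<c. h (L - i))"

lemma pair_energy_Cons:
  "pair_energy h R (x # xs) = row_energy h (R x) xs + pair_energy h R xs"
  unfolding pair_energy_def row_energy_def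
  by (simp only: length_Cons sum.lessThan_Suc_shift) (simp cong: if_cong)

lemma row_energy_snoc:
  "row_energy h P (zs @ [z]) = row_energy h P zs + (if P z then h (Suc (length zs)) else 0)"
  unfolding row_energy_def by (simp add: nth_append cong: if_cong)

lemma tail_sum_Suc_Suc: "tail_sum h (Suc L) (Suc c) = h (Suc L) + tail_sum h L c"
  unfolding tail_sum_def by (simp only: sum.lessThan_Suc_shift) simp

lemma tail_sum_Suc: "tail_sum h (Suc L) c = tail_sum h L c + h (Suc L) - h (Suc L - c)"
  by (induction c) (simp_all add: tail_sum_def)

lemma tail_sum_Suc_le:
  assumes "antimono_on {..Suc L} h"
  shows "tail_sum h (Suc L) c \<le> tail_sum h L c"
  unfolding tail_sum_def by (intro sum_mono monotone_onD[OF assms]) auto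

lemma tail_sum_exchange:
  assumes "antimono_on {..Suc L} h" and "b \<le> r"
  shows "tail_sum h (Suc L) r + tail_sum h L b \<le> tail_sum h L r + tail_sum h (Suc L) b"
proof -
  have "h (Suc L - b) \<le> h (Suc L - r)"
    using assms by (intro monotone_onD[OF assms(1)]) auto
  then show ?thesis by (simp add: tail_sum_Suc)
qed

lemma tail_sum_le_row_energy:
  assumes "antimono_on {..length zs} h"
  shows "tail_sum h (length zs) (length (filter P zs)) \<le> row_energy h P zs"
  using assms
proof (induction zs rule: rev_induct)
  case Nil
  then show ?case by (simp add: tail_sum_def row_energy_def)
next
  case (snoc z zs)
  have IH: "tail_sum h (length zs) (length (filter P zs)) \<le> row_energy h P zs"
    using snoc monotone_on_subset[OF snoc.prems] by auto
  show ?case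
  proof (cases "P z")
    case True
    then show ?thesis using IH by (simp add: row_energy_snoc tail_sum_Suc_Suc)
  next
    case False
    have "tail_sum h (Suc (length zs)) (length (filter P zs))
        \<le> tail_sum h (length zs) (length (filter P zs))"
      using snoc.prems by (intro tail_sum_Suc_le) simp
    then show ?thesis using IH False by (simp add: row_energy_snoc)
  qed
qed

lemma row_energy_sorted:
  assumes "sorted zs" and "\<forall>a\<in>set zs. \<forall>b\<in>set zs. a \<le> b \<longrightarrow> P a \<longrightarrow> P b"
  shows "row_energy h P zs = tail_sum h (length zs) (length (filter P zs))"
  using assms
proof (induction zs rule: rev_induct)
  case Nil
  then show ?case by (simp add: tail_sum_def row_energy_def)
next
  case (snoc z zs)
  have "sorted zs" and "\<forall>a\<in>set zs. \<forall>b\<in>set zs. a \<le> b \<longrightarrow> P a \<longrightarrow> P b"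
    using snoc.prems by (simp_all add: sorted_append)
  then have IH: "row_energy h P zs = tail_sum h (length zs) (length (filter P zs))"
    by (rule snoc.IH)
  show ?case
  proof (cases "P z")
    case True
    then show ?thesis using IH by (simp add: row_energy_snoc tail_sum_Suc_Suc)
  next
    case False
    then have "\<not> P a" if "a \<in> set zs" for a
      using snoc.prems that by (auto simp: sorted_append)
    then have "filter P zs = []"
      by (simp add: filter_empty_conv)
    then show ?thesis using IH False by (simp add: row_energy_snoc tail_sum_def)
  qed
qed

lemma length_filter_mono:
  assumes "\<forall>x\<in>set xs. P x \<longrightarrow> Q x"
  shows "length (filter P xs) \<le> length (filter Q xs)"
  unfolding length_filter_conv_card
  by (rule card_mono) (use assms nth_mem in auto)

lemma length_filter_insort:
  "length (filter P (insort x ys)) = length (filter P ys) + (if P x then 1 else 0)"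
proof -
  have "length (filter P xs) = size (filter_mset P (mset xs))" for xs
    by (metis mset_filter size_mset)
  then show ?thesis by simp
qed

locale separating_relation =
  fixes R :: "'a::linorder \<Rightarrow> 'a \<Rightarrow> bool"
  assumes sym: "R a b \<longleftrightarrow> R b a"
    and widen: "a' \<le> a \<Longrightarrow> a \<le> b \<Longrightarrow> b \<le> b' \<Longrightarrow> R a b \<Longrightarrow> R a' b'"
begin

lemma upward: "x \<le> a \<Longrightarrow> a \<le> b \<Longrightarrow> R x a \<Longrightarrow> R x b"
  using widen[of x x a b] by simp

lemma shift_left:
  assumes "y \<le> z" and "y < x" and "\<not> R y x" and "R x z"
  shows "R y z"
proof (cases "x \<le> z")
  case True
  then show ?thesis using assms widen[of y x z z] by simp
next
  case False
  then have "z \<le> x" by simp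
  then have "R y x" using assms sym[of x z] widen[of y z x x] by simp
  then show ?thesis using assms(3) by simp
qed

lemma row_energy_sorted_above:
  assumes "sorted zs" and "\<forall>z\<in>set zs. x \<le> z"
  shows "row_energy h (R x) zs = tail_sum h (length zs) (length (filter (R x) zs))"
  using assms by (intro row_energy_sorted) (auto intro: upward)

text \<open>Inserting \<open>x\<close> into a sorted list costs at most the cheapest placement of its row.
  Where \<open>x\<close> passes an element \<open>y < x\<close>, the rows of \<open>x\<close> and \<open>y\<close> trade a position,
  and \<open>y\<close> has at least as many partners as \<open>x\<close> among the larger elements.\<close>

lemma tail_sum_swap_le:
  assumes "antimono_on {..Suc (length ys)} h" and "\<forall>z\<in>set ys. y \<le> z" and "y < x"
  shows "tail_sum h (Suc (length ys)) (length (filter (R y) (x # ys)))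
           + tail_sum h (length ys) (length (filter (R x) ys))
         \<le> tail_sum h (length ys) (length (filter (R y) ys))
           + tail_sum h (Suc (length ys)) (length (filter (R x) (y # ys)))"
proof (cases "R y x")
  case True
  then show ?thesis using sym by (simp add: tail_sum_Suc_Suc)
next
  case False
  have "length (filter (R x) ys) \<le> length (filter (R y) ys)"
    using assms(2,3) False by (intro length_filter_mono) (meson shift_left)
  then show ?thesis
    using False sym assms(1) by (simp add: tail_sum_exchange)
qed

lemma pair_energy_insort_le:
  assumes "sorted s" and "antimono_on {..length s} h"
  shows "pair_energy h R (insort x s)
           \<le> pair_energy h R s + tail_sum h (length s) (length (filter (R x) s))"
  using assms
proof (induction s)
  case Nil
  then show ?case by (simp add: pair_energy_def tail_sum_def)
next
  case (Cons y ys)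
  have sorted_ys: "sorted ys" and y_le: "\<forall>z\<in>set ys. y \<le> z"
    using Cons.prems(1) by auto
  show ?case
  proof (cases "x \<le> y")
    case True
    then have "row_energy h (R x) (y # ys)
        = tail_sum h (length (y # ys)) (length (filter (R x) (y # ys)))"
      using Cons.prems(1) y_le by (intro row_energy_sorted_above) auto
    then show ?thesis using True by (simp add: pair_energy_Cons)
  next
    case False
    let ?N = "length ys"
    have IH: "pair_energy h R (insort x ys)
        \<le> pair_energy h R ys + tail_sum h ?N (length (filter (R x) ys))"
      using Cons monotone_on_subset[OF Cons.prems(2)] sorted_ys by auto
    have "row_energy h (R y) (insort x ys)
        = tail_sum h (Suc ?N) (length (filter (R y) (insort x ys)))"
      using sorted_ys y_le False
      by (subst row_energy_sorted_above) (auto simp: sorted_insort set_insort_key)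
    then have lhs: "pair_energy h R (insort x (y # ys))
        = tail_sum h (Suc ?N) (length (filter (R y) (x # ys))) + pair_energy h R (insort x ys)"
      using False by (simp add: pair_energy_Cons length_filter_insort)
    have "row_energy h (R y) ys = tail_sum h ?N (length (filter (R y) ys))"
      using sorted_ys y_le by (rule row_energy_sorted_above)
    then have rhs: "pair_energy h R (y # ys)
        = tail_sum h ?N (length (filter (R y) ys)) + pair_energy h R ys"
      by (simp add: pair_energy_Cons)
    have "y < x"
      using False by simp
    with Cons.prems(2) y_le show ?thesis
      using lhs rhs IH tail_sum_swap_le[of ys h y x] by simp
  qed
qed

theorem pair_energy_sort_le:
  assumes "antimono_on {..<length ws} h"
  shows "pair_energy h R (sort ws) \<le> pair_energy h R ws"
  using assms
proof (induction ws)
  case Nil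
  then show ?case by simp
next
  case (Cons x xs)
  have h_mono: "antimono_on {..length xs} h"
    using Cons.prems by (simp add: lessThan_Suc_atMost)
  have "pair_energy h R (sort (x # xs)) = pair_energy h R (insort x (sort xs))"
    by simp
  also have "\<dots> \<le> pair_energy h R (sort xs) + tail_sum h (length xs) (length (filter (R x) xs))"
    using pair_energy_insort_le[of "sort xs" h x] h_mono by (simp add: filter_sort)
  also have "\<dots> \<le> pair_energy h R xs + row_energy h (R x) xs"
  proof (rule add_mono)
    have "antimono_on {..<length xs} h"
      using h_mono by (rule monotone_on_subset) auto
    then show "pair_energy h R (sort xs) \<le> pair_energy h R xs"
      by (rule Cons.IH)
  qed (use tail_sum_le_row_energy[OF h_mono] in simp)
  also have "\<dots> = pair_energy h R (x # xs)"
    by (simp add: pair_energy_Cons)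
  finally show ?case .
qed

end

lemma separating_relation_Ek: "separating_relation (\<lambda>a b. (a, b) \<in> Ek k)"
  by unfold_locales (auto simp: Ek_def)

lemma Hfun_eq_pair_energy:
  assumes "\<And>a. (a, a) \<notin> E"
  shows "Hfun n h E f = pair_energy h (\<lambda>a b. (a, b) \<in> E) (map f [1..<Suc n])"
proof -
  let ?P = "\<lambda>p. fst p < snd p \<and> (f (fst p), f (snd p)) \<in> E"
  let ?g = "\<lambda>x y. if x < y \<and> (f x, f y) \<in> E then h (y - x) else 0"
  have "Jset n E f = {p \<in> {1..n} \<times> {1..n}. ?P p}"
    using assms unfolding Jset_def by (auto simp: le_less)
  then have "Hfun n h E f = (\<Sum>p\<in>{p \<in> {1..n} \<times> {1..n}. ?P p}. h (snd p - fst p))"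
    unfolding Hfun_def split_def by simp
  also have "\<dots> = (\<Sum>x\<in>{1..n}. \<Sum>y\<in>{1..n}. ?g x y)"
    by (simp add: sum.inter_filter sum.cartesian_product split_def)
  also have "\<dots> = (\<Sum>i<n. \<Sum>j<n. ?g (Suc i) (Suc j))"
    by (simp add: sum.atLeast1_atMost_eq)
  also have "\<dots> = pair_energy h (\<lambda>a b. (a, b) \<in> E) (map f [1..<Suc n])"
    unfolding pair_energy_def by (intro sum.cong refl) (simp_all del: upt_Suc)
  finally show ?thesis .
qed

lemma sorted_nth_eq_Least_card:
  fixes s :: "'a::linorder list"
  assumes "sorted s" and "i < length s"
  shows "(LEAST j. Suc i \<le> card {t. t < length s \<and> s ! t \<le> j}) = s ! i"
proof (rule Least_equality)
  have "{..<Suc i} \<subseteq> {t. t < length s \<and> s ! t \<le> s ! i}"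
    using assms by (auto intro: sorted_nth_mono)
  then have "card {..<Suc i} \<le> card {t. t < length s \<and> s ! t \<le> s ! i}"
    by (intro card_mono) auto
  then show "Suc i \<le> card {t. t < length s \<and> s ! t \<le> s ! i}"
    by simp
next
  fix j assume j: "Suc i \<le> card {t. t < length s \<and> s ! t \<le> j}"
  show "s ! i \<le> j"
  proof (rule ccontr)
    assume "\<not> s ! i \<le> j"
    then have "t < i" if "t < length s" and "s ! t \<le> j" for t
      using that assms(1) sorted_nth_mono[of s i t] by (meson not_le order_trans)
    then have "{t. t < length s \<and> s ! t \<le> j} \<subseteq> {..<i}"
      by auto
    then have "card {t. t < length s \<and> s ! t \<le> j} \<le> card {..<i}"
      by (intro card_mono) auto
    then show False
      using j by simp
  qed
qed

lemma map_Mrearr_eq_sort: "map (Mrearr n u) [1..<Suc n] = sort (map u [1..<Suc n])"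
proof (rule nth_equalityI)
  let ?s = "sort (map u [1..<Suc n])"
  have card_eq: "card {y \<in> {1..n}. u y \<le> j} = card {t. t < length ?s \<and> ?s ! t \<le> j}" for j
  proof -
    have "card {y \<in> {1..n}. u y \<le> j} = length (filter (\<lambda>y. u y \<le> j) [1..<Suc n])"
      by (subst distinct_length_filter) (auto intro: arg_cong[where f = card])
    also have "\<dots> = length (filter (\<lambda>v. v \<le> j) ?s)"
      by (simp add: filter_map comp_def filter_sort del: upt_Suc)
    finally show ?thesis
      by (simp add: length_filter_conv_card del: upt_Suc)
  qed
  show "length (map (Mrearr n u) [1..<Suc n]) = length ?s"
    by simp
  fix i assume "i < length (map (Mrearr n u) [1..<Suc n])"
  then show "map (Mrearr n u) [1..<Suc n] ! i = ?s ! i"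
    unfolding Mrearr_def card_eq using sorted_nth_eq_Least_card[of ?s i] by (simp del: upt_Suc)
qed

theorem theorem2p2:
  fixes n k :: nat and h :: "nat \<Rightarrow> real" and u :: "nat \<Rightarrow> int"
  assumes "n \<ge> 1" and "k \<ge> 1"
    and "\<And>a b. a \<le> b \<Longrightarrow> b \<le> n - 1 \<Longrightarrow> h b \<le> h a"
  shows "Hfun n h (Ek k) u \<ge> Hfun n h (Ek k) (Mrearr n u)"
proof -
  have irrefl: "(a, a) \<notin> Ek k" for a
    by (simp add: Ek_def)
  have "antimono_on {..<n} h"
    using assms(3) by (intro monotone_onI) simp
  then have "pair_energy h (\<lambda>a b. (a, b) \<in> Ek k) (sort (map u [1..<Suc n]))
      \<le> pair_energy h (\<lambda>a b. (a, b) \<in> Ek k) (map u [1..<Suc n])"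
    by (intro separating_relation.pair_energy_sort_le[OF separating_relation_Ek])
      (simp del: upt_Suc)
  then show ?thesis
    by (simp only: Hfun_eq_pair_energy[OF irrefl] map_Mrearr_eq_sort)
qed

end
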